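(* Let $q\ge 2$ and $0\le\rho<1-1/q$, and let $\gamma>0$. Then for all sufficiently large $n$ the following holds. Let $C\subseteq\{0,\dots,q-1\}^n$ be a code of rate $1-H_q(\rho)+\gamma$. Then there exists a codeword $c\in C$ such that for at least a $1-q^{-\Omega(\gamma n)}$ fraction of error patterns $e\in\{0,\dots,q-1\}^n$ of Hamming weight at most $\rho n$, the Hamming ball of radius $\rho n$ around $c+e$ contains at least two codewords of $C$.
   Context: $H_q(x)=x\log_q(q-1)-x\log_q x-(1-x)\log_q(1-x)$ is the $q$-ary entropy function. A code $C\subseteq\Sigma^n$ with $|\Sigma|=q$ has rate $\log_q|C|/n$. Addition $c+e$ is coordinatewise (e.g. modulo $q$). The Hamming weight of a vector is its number of nonzero coordinates, and the Hamming ball of radius $r$ around $y$ is the set of vectors differing from $y$ in at most $r$ coordinates. *)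

theory Defs
  imports Complex_Main
begin

definition Hq :: "nat \<Rightarrow> real \<Rightarrow> real" where
  "Hq q x = x * log q (real q - 1) - x * log q x - (1 - x) * log q (1 - x)"

definition words :: "nat \<Rightarrow> nat \<Rightarrow> nat list set" where
  "words q n = {xs. length xs = n \<and> set xs \<subseteq> {..<q}}"

definition vadd :: "nat \<Rightarrow> nat list \<Rightarrow> nat list \<Rightarrow> nat list" where
  "vadd q xs ys = map2 (\<lambda>a b. (a + b) mod q) xs ys"

definition hweight :: "nat list \<Rightarrow> nat" where
  "hweight xs = card {i. i < length xs \<and> xs ! i \<noteq> 0}"

definition hdist :: "nat list \<Rightarrow> nat list \<Rightarrow> nat" where
  "hdist xs ys = card {i. i < length xs \<and> xs ! i \<noteq> ys ! i}"

definition hball :: "nat \<Rightarrow> nat \<Rightarrow> nat list \<Rightarrow> real \<Rightarrow> nat list set" where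
  "hball q n y r = {x \<in> words q n. real (hdist x y) \<le> r}"

definition code_rate :: "nat \<Rightarrow> nat \<Rightarrow> nat list set \<Rightarrow> real" where
  "code_rate q n C = log q (real (card C)) / real n"

end

theory Submission
  imports Defs "HOL-Number_Theory.Cong" "HOL-Real_Asymp.Real_Asymp"
begin

text \<open>Call an error pattern e unambiguous for the codeword c if c is the only codeword within
  distance \<rho>n of c + e. Since c lies in that ball, the received words c + e with e unambiguous
  for c are pairwise distinct over all codewords c, so the numbers of unambiguous patterns sum to
  at most q^n. A code of rate 1 - H_q(\<rho>) + \<gamma> has q^{n(1 - H_q(\<rho>) + \<gamma>)} codewords,
  while the ball of radius \<rho>n has volume at least q^{n H_q(\<rho>)} / poly(n) (bound a single
  weight class, comparing with the mode of the binomial distribution Bin(n, \<rho>)). Hence the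
  average codeword has only a q^{-\<gamma>n/2} fraction of unambiguous patterns once n is large.\<close>

section \<open>Words and coordinatewise addition\<close>

lemma finite_words: "finite (words q n)"
  unfolding words_def using finite_lists_length_eq[of "{..<q}" n] by (simp add: conj_commute)

lemma card_words: "card (words q n) = q ^ n"
  unfolding words_def using card_lists_length_eq[of "{..<q}" n] by (simp add: conj_commute)

lemma words_Suc: "words q (Suc n) = (\<lambda>(x, xs). x # xs) ` ({..<q} \<times> words q n)"
  unfolding words_def by (auto simp: length_Suc_conv image_iff)

lemma nth_in_words: "xs \<in> words q n \<Longrightarrow> i < n \<Longrightarrow> xs ! i < q"
  unfolding words_def using nth_mem by fastforce

lemma hweight_Cons: "hweight (x # xs) = (if x = 0 then 0 else 1) + hweight xs"
proof -
  have "hweight ys = length (filter (\<lambda>y. y \<noteq> 0) ys)" for ys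
    unfolding hweight_def by (simp add: length_filter_conv_card)
  then show ?thesis by simp
qed

lemma add_mod_left_cancel:
  fixes a x y q :: nat
  assumes "x < q" "y < q"
  shows "(a + x) mod q = (a + y) mod q \<longleftrightarrow> x = y"
  using cong_add_lcancel_nat[of a x y q, unfolded Cong.cong_def] assms by simp

lemma nth_vadd: "i < length c \<Longrightarrow> length e = length c \<Longrightarrow> vadd q c e ! i = (c ! i + e ! i) mod q"
  unfolding vadd_def by simp

lemma vadd_in_words: "q > 0 \<Longrightarrow> c \<in> words q n \<Longrightarrow> e \<in> words q n \<Longrightarrow> vadd q c e \<in> words q n"
  unfolding words_def vadd_def by (auto dest!: set_zip_rightD set_zip_leftD)

lemma hdist_vadd_right:
  assumes "c \<in> words q n" "e \<in> words q n"
  shows "hdist c (vadd q c e) = hweight e"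
proof -
  have len: "length c = n" "length e = n" using assms by (simp_all add: words_def)
  have "c ! i \<noteq> vadd q c e ! i \<longleftrightarrow> e ! i \<noteq> 0" if "i < n" for i
  proof -
    have "c ! i < q" "e ! i < q" using that assms by (simp_all add: nth_in_words)
    then show ?thesis
      using that len add_mod_left_cancel[where a = "c ! i" and x = "e ! i" and y = 0 and q = q]
      by (auto simp: nth_vadd)
  qed
  then show ?thesis unfolding hdist_def hweight_def using len by (metis (lifting))
qed

lemma vadd_left_cancel:
  assumes "c \<in> words q n" "e \<in> words q n" "e' \<in> words q n" "vadd q c e = vadd q c e'"
  shows "e = e'"
proof (rule nth_equalityI)
  have len: "length c = n" "length e = n" "length e' = n" using assms by (simp_all add: words_def)
  then show "length e = length e'" by simp
  fix i assume "i < length e"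
  then have "(c ! i + e ! i) mod q = (c ! i + e' ! i) mod q"
    using arg_cong[OF assms(4), of "\<lambda>xs. xs ! i"] len by (simp add: nth_vadd)
  then show "e ! i = e' ! i"
    using \<open>i < length e\<close> assms len
      add_mod_left_cancel[where a = "c ! i" and x = "e ! i" and y = "e' ! i" and q = q]
    by (simp add: nth_in_words)
qed

definition words_of_weight :: "nat \<Rightarrow> nat \<Rightarrow> nat \<Rightarrow> nat list set" where
  "words_of_weight q n j = {xs \<in> words q n. hweight xs = j}"

lemma words_of_weight_Suc_0:
  "q > 0 \<Longrightarrow> words_of_weight q (Suc n) 0 = (#) 0 ` words_of_weight q n 0"
  by (auto simp: words_of_weight_def words_Suc hweight_Cons split: if_splits)

lemma words_of_weight_Suc_Suc:
  "q > 0 \<Longrightarrow> words_of_weight q (Suc n) (Suc j) =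
     (#) 0 ` words_of_weight q n (Suc j) \<union> (\<lambda>(x, xs). x # xs) ` ({1..<q} \<times> words_of_weight q n j)"
  by (auto simp: words_of_weight_def words_Suc hweight_Cons image_iff split: if_splits)

lemma card_words_of_weight:
  assumes "q > 0"
  shows "card (words_of_weight q n j) = (n choose j) * (q - 1) ^ j"
proof (induction n arbitrary: j)
  case 0
  have "words_of_weight q 0 j = (if j = 0 then {[]} else {})"
    by (auto simp: words_of_weight_def words_def hweight_def)
  then show ?case by simp
next
  case (Suc n)
  have fin: "finite (words_of_weight q n j)" for j
    unfolding words_of_weight_def using finite_words by simp
  show ?case
  proof (cases j)
    case 0
    then show ?thesis
      using Suc.IH assms by (simp add: words_of_weight_Suc_0 card_image del: One_nat_def)
  next
    case (Suc i)
    have "card (words_of_weight q (Suc n) j) =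
        card (words_of_weight q n (Suc i)) + card ({1..<q} \<times> words_of_weight q n i)"
      unfolding Suc words_of_weight_Suc_Suc[OF assms]
      by (subst card_Un_disjoint) (auto simp: fin card_image inj_on_def)
    also have "\<dots> = (n choose Suc i) * (q - 1) ^ Suc i + (q - 1) * ((n choose i) * (q - 1) ^ i)"
      using Suc.IH by (simp add: card_cartesian_product)
    also have "\<dots> = (Suc n choose j) * (q - 1) ^ j"
      unfolding Suc binomial_Suc_Suc power_Suc by (simp only: add_mult_distrib2 ac_simps)
    finally show ?thesis .
  qed
qed

section \<open>Unambiguous error patterns\<close>

definition low_weight_words :: "nat \<Rightarrow> nat \<Rightarrow> real \<Rightarrow> nat list set" where
  "low_weight_words q n r = {e \<in> words q n. real (hweight e) \<le> r}"

definition ambiguous_errors :: "nat \<Rightarrow> nat \<Rightarrow> nat list set \<Rightarrow> real \<Rightarrow> nat list \<Rightarrow> nat list set" where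
  "ambiguous_errors q n C r c =
     {e \<in> words q n. real (hweight e) \<le> r \<and> 2 \<le> card (C \<inter> hball q n (vadd q c e) r)}"

definition unambiguous_errors :: "nat \<Rightarrow> nat \<Rightarrow> nat list set \<Rightarrow> real \<Rightarrow> nat list \<Rightarrow> nat list set" where
  "unambiguous_errors q n C r c = low_weight_words q n r - ambiguous_errors q n C r c"

lemma finite_low_weight_words: "finite (low_weight_words q n r)"
  unfolding low_weight_words_def using finite_words by simp

lemma card_low_weight_words_le: "card (low_weight_words q n r) \<le> q ^ n"
  unfolding low_weight_words_def card_words[symmetric] by (intro card_mono finite_words) auto

lemma card_low_weight_words_split:
  "card (low_weight_words q n r) = card (ambiguous_errors q n C r c) + card (unambiguous_errors q n C r c)"
proof -
  have "ambiguous_errors q n C r c \<subseteq> low_weight_words q n r"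
    unfolding ambiguous_errors_def low_weight_words_def by auto
  then show ?thesis
    unfolding unambiguous_errors_def
    by (metis card_Diff_subset finite_low_weight_words card_mono le_add_diff_inverse finite_subset)
qed

lemma inj_on_vadd_unambiguous_errors:
  assumes "C \<subseteq> words q n"
  shows "inj_on (\<lambda>(c, e). vadd q c e) (SIGMA c:C. unambiguous_errors q n C r c)"
proof (rule inj_onI, clarsimp)
  fix c e c' e'
  assume c: "c \<in> C" "e \<in> unambiguous_errors q n C r c"
    and c': "c' \<in> C" "e' \<in> unambiguous_errors q n C r c'"
    and eq: "vadd q c e = vadd q c' e'"
  have words: "c \<in> words q n" "c' \<in> words q n" "e \<in> words q n" "e' \<in> words q n"
    using assms c c' by (auto simp: unambiguous_errors_def low_weight_words_def)
  have "c \<in> hball q n (vadd q c e) r" "c' \<in> hball q n (vadd q c' e') r"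
    using c c' words
    by (auto simp: hball_def hdist_vadd_right unambiguous_errors_def low_weight_words_def)
  moreover have "finite C"
    using assms finite_words finite_subset by blast
  moreover have "card (C \<inter> hball q n (vadd q c e) r) < 2"
    using c(2) by (auto simp: unambiguous_errors_def ambiguous_errors_def low_weight_words_def)
  ultimately have "c = c'"
    using c(1) c'(1) eq card_mono[of "C \<inter> hball q n (vadd q c e) r" "{c, c'}"]
    by (cases "c = c'") auto
  then show "c = c' \<and> e = e'"
    using eq words vadd_left_cancel by blast
qed

lemma sum_card_unambiguous_errors_le:
  assumes "C \<subseteq> words q n" "q > 0"
  shows "(\<Sum>c\<in>C. card (unambiguous_errors q n C r c)) \<le> q ^ n"
proof -
  have "finite C"
    using assms finite_words finite_subset by blast
  then have "(\<Sum>c\<in>C. card (unambiguous_errors q n C r c)) =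
      card (SIGMA c:C. unambiguous_errors q n C r c)"
    by (simp add: card_SigmaI unambiguous_errors_def finite_low_weight_words)
  also have "\<dots> = card ((\<lambda>(c, e). vadd q c e) ` (SIGMA c:C. unambiguous_errors q n C r c))"
    using inj_on_vadd_unambiguous_errors[OF assms(1)] by (simp add: card_image)
  also have "\<dots> \<le> card (words q n)"
    using assms by (intro card_mono finite_words)
      (auto simp: unambiguous_errors_def low_weight_words_def intro!: vadd_in_words)
  finally show ?thesis
    by (simp add: card_words)
qed

lemma exists_codeword_with_many_ambiguous_errors:
  fixes \<delta> :: real
  assumes "C \<subseteq> words q n" "C \<noteq> {}" "q > 0"
    and volume: "real q ^ n \<le> card C * \<delta> * card (low_weight_words q n r)"
  shows "\<exists>c\<in>C. (1 - \<delta>) * card (low_weight_words q n r) \<le> card (ambiguous_errors q n C r c)"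
proof (rule ccontr)
  assume no_codeword: "\<not> ?thesis"
  have "\<delta> * card (low_weight_words q n r) < card (unambiguous_errors q n C r c)" if "c \<in> C" for c
  proof -
    have "card (ambiguous_errors q n C r c) < (1 - \<delta>) * card (low_weight_words q n r)"
      using no_codeword that by auto
    moreover have "real (card (low_weight_words q n r)) =
        card (ambiguous_errors q n C r c) + card (unambiguous_errors q n C r c)"
      using card_low_weight_words_split[of q n r C c] by simp
    ultimately show ?thesis
      by (simp add: algebra_simps)
  qed
  moreover have "finite C"
    using assms finite_words finite_subset by blast
  ultimately have "(\<Sum>c\<in>C. \<delta> * card (low_weight_words q n r))
      < (\<Sum>c\<in>C. real (card (unambiguous_errors q n C r c)))"
    using assms(2) by (intro sum_strict_mono) auto
  also have "\<dots> \<le> real q ^ n"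
    using sum_card_unambiguous_errors_le[OF assms(1,3)] by (metis of_nat_le_iff of_nat_power of_nat_sum)
  finally show False
    using volume by (simp add: mult.assoc)
qed

section \<open>Volume of Hamming balls\<close>

lemma le_max_of_unimodal:
  fixes T :: "nat \<Rightarrow> 'a::linorder"
  assumes up: "\<And>j. j < k \<Longrightarrow> T j \<le> T (Suc j)"
    and down: "\<And>j. k < j \<Longrightarrow> j < n \<Longrightarrow> T (Suc j) \<le> T j"
    and "j \<le> n"
  shows "T j \<le> max (T k) (T (Suc k))"
proof (cases "j \<le> k")
  case True
  then have "T j \<le> T k"
    by (induction rule: inc_induct) (auto intro: order_trans up)
  then show ?thesis by (simp add: le_max_iff_disj)
next
  case False
  then have "Suc k \<le> j" by simp
  then have "T j \<le> T (Suc k)"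
    using \<open>j \<le> n\<close> by (induction rule: dec_induct) (auto intro!: order_trans[OF down])
  then show ?thesis by (simp add: le_max_iff_disj)
qed

definition binomial_term :: "nat \<Rightarrow> real \<Rightarrow> nat \<Rightarrow> real" where
  "binomial_term n p j = real (n choose j) * p ^ j * (1 - p) ^ (n - j)"

lemma binomial_term_nonneg: "0 \<le> p \<Longrightarrow> p \<le> 1 \<Longrightarrow> 0 \<le> binomial_term n p j"
  unfolding binomial_term_def by simp

lemma sum_binomial_term: "(\<Sum>j\<le>n. binomial_term n p j) = 1"
  using binomial_ring[of p "1 - p" n] unfolding binomial_term_def by simp

lemma binomial_term_Suc:
  assumes "j < n"
  shows "binomial_term n p (Suc j) * ((real j + 1) * (1 - p)) = binomial_term n p j * ((real n - real j) * p)"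
proof -
  have "real (Suc j * (n choose Suc j)) = real ((n - j) * (n choose j))"
    by (metis binomial_absorb_comp binomial_absorption mult.commute)
  then have binom: "real (n choose Suc j) * (real j + 1) = real (n choose j) * (real n - real j)"
    using assms by (simp add: of_nat_diff algebra_simps)
  have power: "(1 - p) ^ (n - Suc j) * (1 - p) = (1 - p) ^ (n - j)"
    using assms by (metis Suc_diff_Suc power_Suc2)
  have "binomial_term n p (Suc j) * ((real j + 1) * (1 - p)) =
        (real (n choose Suc j) * (real j + 1)) * p ^ j * p * ((1 - p) ^ (n - Suc j) * (1 - p))"
    unfolding binomial_term_def by (simp add: algebra_simps)
  also have "\<dots> = binomial_term n p j * ((real n - real j) * p)"
    unfolding binom power binomial_term_def by (simp add: algebra_simps)
  finally show ?thesis .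
qed

lemma binomial_term_Suc_le:
  assumes "0 \<le> p" "p < 1" "j < n" "(real n - real j) * p \<le> c * ((real j + 1) * (1 - p))"
  shows "binomial_term n p (Suc j) \<le> c * binomial_term n p j"
proof -
  have "binomial_term n p (Suc j) * ((real j + 1) * (1 - p))
      \<le> binomial_term n p j * (c * ((real j + 1) * (1 - p)))"
    unfolding binomial_term_Suc[OF assms(3)] using assms(4) binomial_term_nonneg assms(1,2)
    by (intro mult_left_mono) auto
  then show ?thesis
    using assms(2) by (simp add: mult_le_cancel_right ac_simps)
qed

lemma binomial_term_le_Suc:
  assumes "0 \<le> p" "p < 1" "j < n" "(real j + 1) * (1 - p) \<le> (real n - real j) * p"
  shows "binomial_term n p j \<le> binomial_term n p (Suc j)"
proof -
  have "binomial_term n p j * ((real j + 1) * (1 - p))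
      \<le> binomial_term n p (Suc j) * ((real j + 1) * (1 - p))"
    unfolding binomial_term_Suc[OF assms(3)] using assms(4) binomial_term_nonneg assms(1,2)
    by (intro mult_left_mono) auto
  then show ?thesis
    using assms(2) by (simp add: mult_le_cancel_right)
qed

text \<open>The mode of Bin(n, p) is \<lfloor>(n + 1) p\<rfloor>, which is k or k + 1 for k = \<lfloor>pn\<rfloor>; the
  hypothesis 1 \<le> n(1 - p) makes the term at k + 1 at most twice the one at k.\<close>

lemma binomial_term_at_floor_ge:
  fixes p :: real
  assumes p: "0 < p" "p < 1" and n: "1 \<le> real n * (1 - p)"
    and k: "real k \<le> p * n" "p * n < real k + 1"
  shows "1 \<le> 2 * (real n + 1) * binomial_term n p k"
proof -
  have "0 < real n"
    using n p by (cases n) auto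
  then have "p * n < 1 * real n"
    using p by (intro mult_strict_right_mono) auto
  with k have "k < n" by simp
  have "binomial_term n p j \<le> max (binomial_term n p k) (binomial_term n p (Suc k))" if "j \<le> n" for j
  proof (rule le_max_of_unimodal[OF _ _ that])
    fix j assume "j < k"
    then have "real j + 1 \<le> (real n + 1) * p"
      using k p by (simp add: algebra_simps)
    then show "binomial_term n p j \<le> binomial_term n p (Suc j)"
      using \<open>j < k\<close> \<open>k < n\<close> p by (intro binomial_term_le_Suc) (simp_all add: algebra_simps)
  next
    fix j assume "k < j" "j < n"
    then have "(real n + 1) * p \<le> real j + 1"
      using k p by (simp add: algebra_simps)
    then show "binomial_term n p (Suc j) \<le> binomial_term n p j"
      using binomial_term_Suc_le[of p j n 1] \<open>j < n\<close> p by (simp add: algebra_simps)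
  qed
  moreover have "binomial_term n p (Suc k) \<le> 2 * binomial_term n p k"
  proof (rule binomial_term_Suc_le)
    have "(real n - real k) * p \<le> (real n * (1 - p) + 1) * p"
      using k p by (intro mult_right_mono) (simp_all add: algebra_simps)
    also have "\<dots> = p * n * (1 - p) + p"
      by (simp add: algebra_simps)
    also have "\<dots> \<le> 2 * ((real k + 1) * (1 - p))"
    proof -
      have "p * n * (1 - p) \<le> (real k + 1) * (1 - p)"
        using k p by (intro mult_right_mono) auto
      moreover have "p * 1 \<le> p * (real n * (1 - p))"
        using n p by (intro mult_left_mono) auto
      ultimately show ?thesis
        by (simp add: algebra_simps)
    qed
    finally show "(real n - real k) * p \<le> 2 * ((real k + 1) * (1 - p))" .
  qed (use p \<open>k < n\<close> in auto)
  ultimately have "binomial_term n p j \<le> 2 * binomial_term n p k" if "j \<le> n" for j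
    using that binomial_term_nonneg[of p n k] p by fastforce
  then have "(\<Sum>j\<le>n. binomial_term n p j) \<le> (\<Sum>j\<le>n. 2 * binomial_term n p k)"
    by (intro sum_mono) auto
  then show ?thesis
    by (simp add: sum_binomial_term algebra_simps)
qed

lemma entropy_power_le_weight_ratio:
  fixes q :: nat and \<rho> :: real
  assumes q: "q \<ge> 2" and \<rho>: "0 < \<rho>" "\<rho> < 1 - 1 / q"
    and k: "k \<le> n" "\<rho> * n < real k + 1"
  shows "q powr (n * Hq q \<rho>) * (\<rho> / ((real q - 1) * (1 - \<rho>)))
           \<le> (real q - 1) ^ k / (\<rho> ^ k * (1 - \<rho>) ^ (n - k))"
proof -
  define L1 L2 L\<rho> where "L1 = ln (real q - 1)" and "L2 = ln (1 - \<rho>)" and "L\<rho> = ln \<rho>"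
  have "0 < 1 / real q"
    using q by simp
  then have pos: "0 < real q - 1" "0 < 1 - \<rho>"
    using q \<rho>(2) by linarith+
  have "\<rho> < (real q - 1) * (1 - \<rho>)"
    using q \<rho> by (simp add: field_simps)
  then have "L\<rho> < ln ((real q - 1) * (1 - \<rho>))"
    unfolding L\<rho>_def using \<rho> by simp
  also have "\<dots> = L1 + L2"
    unfolding L1_def L2_def using pos by (simp add: ln_mult)
  finally have "L\<rho> < L1 + L2" .
  have "ln (q powr (n * Hq q \<rho>) * (\<rho> / ((real q - 1) * (1 - \<rho>))))
      = n * (\<rho> * L1 - \<rho> * L\<rho> - (1 - \<rho>) * L2) + L\<rho> - L1 - L2"
  proof -
    have "Hq q \<rho> * ln q = \<rho> * L1 - \<rho> * L\<rho> - (1 - \<rho>) * L2"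
      unfolding Hq_def log_def L1_def L2_def L\<rho>_def using q by (simp add: field_simps)
    moreover have "ln (\<rho> / ((real q - 1) * (1 - \<rho>))) = L\<rho> - L1 - L2"
      unfolding L1_def L2_def L\<rho>_def using \<rho> pos by (simp add: ln_div ln_mult)
    moreover have "ln (q powr (n * Hq q \<rho>) * (\<rho> / ((real q - 1) * (1 - \<rho>))))
        = ln (q powr (n * Hq q \<rho>)) + ln (\<rho> / ((real q - 1) * (1 - \<rho>)))"
      using q \<rho> pos by (intro ln_mult_pos) auto
    ultimately show ?thesis
      using q by (simp add: ln_powr)
  qed
  also have "\<dots> \<le> k * L1 - k * L\<rho> - (real n - real k) * L2"
  proof -
    have "0 \<le> (real k + 1 - \<rho> * n) * (L1 + L2 - L\<rho>)"
      using k \<open>L\<rho> < L1 + L2\<close> by simp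
    then show ?thesis
      by (simp add: algebra_simps)
  qed
  also have "\<dots> = ln ((real q - 1) ^ k / (\<rho> ^ k * (1 - \<rho>) ^ (n - k)))"
    using \<rho> pos k unfolding L1_def L2_def L\<rho>_def
    by (simp add: ln_mult ln_div ln_realpow of_nat_diff)
  finally show ?thesis
    using \<rho> pos by simp
qed

lemma card_low_weight_words_ge:
  fixes q :: nat and \<rho> :: real
  assumes q: "q \<ge> 2" and \<rho>: "0 < \<rho>" "\<rho> < 1 - 1 / q" and n: "1 \<le> real n * (1 - \<rho>)"
  shows "q powr (n * Hq q \<rho>) * (\<rho> / ((real q - 1) * (1 - \<rho>))) / (2 * (real n + 1))
           \<le> card (low_weight_words q n (\<rho> * n))"
proof -
  have "0 < 1 / real q"
    using q by simp
  then have "\<rho> < 1"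
    using \<rho> by linarith
  define k where "k = nat \<lfloor>\<rho> * n\<rfloor>"
  have "real k = \<lfloor>\<rho> * n\<rfloor>"
    unfolding k_def using \<rho> by simp
  then have k: "real k \<le> \<rho> * n" "\<rho> * n < real k + 1"
    using of_int_floor_le[of "\<rho> * n"] real_of_int_floor_add_one_gt[of "\<rho> * n"] by linarith+
  have "\<rho> * n \<le> 1 * real n"
    using \<open>\<rho> < 1\<close> by (intro mult_right_mono) auto
  with k have "k \<le> n" by linarith
  define X where "X = (real q - 1) ^ k / (\<rho> ^ k * (1 - \<rho>) ^ (n - k))"
  have "q powr (n * Hq q \<rho>) * (\<rho> / ((real q - 1) * (1 - \<rho>))) / (2 * (real n + 1))
      \<le> X / (2 * (real n + 1))"
    unfolding X_def using entropy_power_le_weight_ratio[OF q \<rho> \<open>k \<le> n\<close> k(2)]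
    by (intro divide_right_mono) auto
  also have "\<dots> \<le> X * binomial_term n \<rho> k"
  proof -
    have "1 \<le> 2 * (real n + 1) * binomial_term n \<rho> k"
      using binomial_term_at_floor_ge[OF \<rho>(1) \<open>\<rho> < 1\<close> n k] .
    moreover have "0 \<le> X"
      unfolding X_def using q \<rho> \<open>\<rho> < 1\<close> by simp
    ultimately have "X * 1 \<le> X * (2 * (real n + 1) * binomial_term n \<rho> k)"
      by (intro mult_left_mono)
    then show ?thesis
      by (simp add: divide_le_eq mult_ac)
  qed
  also have "\<dots> = card (words_of_weight q n k)"
    using q \<rho> \<open>\<rho> < 1\<close> card_words_of_weight[of q n k] unfolding X_def binomial_term_def
    by (simp add: of_nat_diff)
  also have "\<dots> \<le> card (low_weight_words q n (\<rho> * n))"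
    using k(1) finite_low_weight_words
    by (auto simp: words_of_weight_def low_weight_words_def intro!: card_mono)
  finally show ?thesis .
qed

lemma eventually_entropy_power_le_card_low_weight_words:
  fixes q :: nat and \<rho> \<epsilon> :: real
  assumes q: "q \<ge> 2" and \<rho>: "0 \<le> \<rho>" "\<rho> < 1 - 1 / q" and \<epsilon>: "\<epsilon> > 0"
  shows "\<forall>\<^sub>F n in sequentially.
           q powr (n * Hq q \<rho>) \<le> q powr (\<epsilon> * n) * card (low_weight_words q n (\<rho> * n))"
proof (cases "\<rho> = 0")
  case True
  have "1 \<le> real (card (low_weight_words q n (\<rho> * n)))" for n
  proof -
    have "replicate n 0 \<in> low_weight_words q n (\<rho> * n)"
      using q True by (auto simp: low_weight_words_def words_def hweight_def)
    then show ?thesis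
      using finite_low_weight_words by (metis One_nat_def Suc_leI card_gt_0_iff empty_iff of_nat_1 of_nat_le_iff)
  qed
  moreover have "1 \<le> q powr (\<epsilon> * n)" for n :: nat
    using q \<epsilon> by (simp add: ge_one_powr_ge_zero)
  ultimately have "1 * 1 \<le> q powr (\<epsilon> * n) * card (low_weight_words q n (\<rho> * n))" for n :: nat
    by (intro mult_mono) auto
  moreover have "q powr (n * Hq q \<rho>) = 1" for n :: nat
    using True q by (simp add: Hq_def)
  ultimately show ?thesis
    by simp
next
  case False
  define c where "c = \<rho> / ((real q - 1) * (1 - \<rho>))"
  have "0 < 1 / real q"
    using q by simp
  then have "\<rho> < 1" "0 < \<rho>"
    using \<rho> False by linarith+
  then have "0 < c"
    unfolding c_def using q by simp
  have "\<forall>\<^sub>F n in sequentially. 1 \<le> real n * (1 - \<rho>)"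
    using \<open>\<rho> < 1\<close> by real_asymp
  moreover have "\<forall>\<^sub>F n in sequentially. 2 * (real n + 1) \<le> c * q powr (\<epsilon> * n)"
    using \<open>0 < c\<close> \<epsilon> q by real_asymp
  ultimately show ?thesis
  proof eventually_elim
    case (elim n)
    have "q powr (n * Hq q \<rho>) * c / (2 * (real n + 1)) \<le> card (low_weight_words q n (\<rho> * n))"
      using card_low_weight_words_ge[OF q \<open>0 < \<rho>\<close> \<rho>(2) elim(1)] unfolding c_def .
    then have "q powr (n * Hq q \<rho>) * c \<le> 2 * (real n + 1) * card (low_weight_words q n (\<rho> * n))"
      by (simp add: pos_divide_le_eq mult_ac)
    also have "\<dots> \<le> c * q powr (\<epsilon> * n) * card (low_weight_words q n (\<rho> * n))"
      using elim(2) by (intro mult_right_mono) auto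
    finally show ?case
      using \<open>0 < c\<close> by (simp add: mult_ac)
  qed
qed

section \<open>Codes above the capacity\<close>

lemma exponent_le_of_powr_le_card_low_weight_words:
  assumes "q \<ge> 2" "n > 0" "q powr (n * H) \<le> q powr (\<epsilon> * n) * card (low_weight_words q n r)"
  shows "H \<le> 1 + \<epsilon>"
proof -
  have "real (card (low_weight_words q n r)) \<le> q powr n"
    using card_low_weight_words_le[of q n r] assms(1) by (simp add: powr_realpow of_nat_le_iff[symmetric])
  then have "q powr (n * H) \<le> q powr (\<epsilon> * n) * q powr n"
    using assms(3) by (meson mult_left_mono order_trans powr_ge_zero)
  also have "\<dots> = q powr ((1 + \<epsilon>) * n)"
    by (simp add: powr_add[symmetric] algebra_simps)
  finally have "n * H \<le> (1 + \<epsilon>) * n"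
    using assms(1) by simp
  then show ?thesis
    using assms(2) by (simp add: mult.commute)
qed

lemma powr_le_card_of_code_rate:
  assumes "q \<ge> 2" "finite C" "C \<noteq> {}" "n > 0" "R \<le> code_rate q n C"
  shows "q powr (R * n) \<le> card C"
proof -
  have "R * n \<le> log q (card C)"
    using assms(4,5) by (simp add: code_rate_def pos_le_divide_eq)
  then have "q powr (R * n) \<le> q powr (log q (card C))"
    using assms(1) by simp
  also have "\<dots> = card C"
    using assms by (simp add: card_gt_0_iff)
  finally show ?thesis .
qed

lemma eventually_exists_codeword_with_many_ambiguous_errors:
  fixes q :: nat and \<rho> \<gamma> :: real
  assumes q: "q \<ge> 2" and \<rho>: "0 \<le> \<rho>" "\<rho> < 1 - 1 / real q" and "\<gamma> > 0"
  shows "\<forall>\<^sub>F n in sequentially. \<forall>C. C \<subseteq> words q n \<and> 1 - Hq q \<rho> + \<gamma> \<le> code_rate q n C \<longrightarrow>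
           (\<exists>c\<in>C. (1 - q powr (- (1/2) * \<gamma> * n)) * card (low_weight_words q n (\<rho> * n))
                    \<le> card (ambiguous_errors q n C (\<rho> * n) c))"
proof -
  obtain N where N: "\<And>n. n \<ge> N \<Longrightarrow>
      q powr (n * Hq q \<rho>) \<le> q powr (\<gamma> / 2 * n) * card (low_weight_words q n (\<rho> * n))"
    using eventually_entropy_power_le_card_low_weight_words[OF q \<rho>, of "\<gamma> / 2"] \<open>\<gamma> > 0\<close>
    unfolding eventually_sequentially by auto
  show ?thesis
    unfolding eventually_sequentially
  proof (intro exI[of _ "max N 1"] allI impI, elim conjE)
    fix n C
    assume n: "max N 1 \<le> n" and C: "C \<subseteq> words q n"
      and rate: "1 - Hq q \<rho> + \<gamma> \<le> code_rate q n C"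
    let ?H = "Hq q \<rho>" and ?V = "real (card (low_weight_words q n (\<rho> * n)))"
    have q_gt_1: "1 < real q"
      using q by simp
    have volume: "q powr (n * ?H) \<le> q powr (\<gamma> / 2 * n) * ?V"
      using N n by simp
    have "C \<noteq> {}"
    proof
      assume "C = {}"
      \<comment> \<open>the empty code has rate 0, since ln 0 = 0 in Isabelle\<close>
      then have "1 + \<gamma> \<le> ?H"
        using rate by (simp add: code_rate_def log_def)
      moreover have "?H \<le> 1 + \<gamma> / 2"
        using exponent_le_of_powr_le_card_low_weight_words[OF q _ volume] n by simp
      ultimately show False
        using \<open>\<gamma> > 0\<close> by simp
    qed
    have "finite C"
      using C finite_words finite_subset by blast
    have "real q ^ n =
        q powr ((1 - ?H + \<gamma>) * n) * q powr (- (1/2) * \<gamma> * n) * q powr (n * ?H - \<gamma> / 2 * n)"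
      using q_gt_1 by (simp add: powr_add[symmetric] powr_realpow[symmetric] algebra_simps)
    also have "\<dots> \<le> card C * q powr (- (1/2) * \<gamma> * n) * ?V"
    proof (intro mult_mono)
      show "q powr ((1 - ?H + \<gamma>) * n) \<le> card C"
        using powr_le_card_of_code_rate[OF q \<open>finite C\<close> \<open>C \<noteq> {}\<close> _ rate] n by simp
      show "q powr (n * ?H - \<gamma> / 2 * n) \<le> ?V"
        using volume q_gt_1 by (simp add: powr_diff pos_divide_le_eq mult_ac)
    qed auto
    finally have "real q ^ n \<le> card C * q powr (- (1/2) * \<gamma> * real n) * ?V" .
    then show "\<exists>c\<in>C. (1 - q powr (- (1/2) * \<gamma> * n)) * card (low_weight_words q n (\<rho> * n))
                    \<le> card (ambiguous_errors q n C (\<rho> * n) c)"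
      using exists_codeword_with_many_ambiguous_errors[OF C \<open>C \<noteq> {}\<close>] q by simp
  qed
qed

theorem lemma3p4:
  fixes q :: nat and \<rho> :: real
  assumes "q \<ge> 2" and "0 \<le> \<rho>" and "\<rho> < 1 - 1 / real q"
  shows "\<exists>\<alpha>>0. \<forall>\<gamma>>0. \<exists>N. \<forall>n\<ge>N. \<forall>C.
           C \<subseteq> words q n \<and> code_rate q n C \<ge> 1 - Hq q \<rho> + \<gamma> \<longrightarrow>
           (\<exists>c\<in>C.
              real (card {e \<in> words q n. real (hweight e) \<le> \<rho> * n \<and>
                          card (C \<inter> hball q n (vadd q c e) (\<rho> * n)) \<ge> 2})
              \<ge> (1 - real q powr (- \<alpha> * \<gamma> * real n)) *
                 real (card {e \<in> words q n. real (hweight e) \<le> \<rho> * n}))"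
  unfolding ambiguous_errors_def[symmetric] low_weight_words_def[symmetric]
  using eventually_exists_codeword_with_many_ambiguous_errors[OF assms]
  by (intro exI[of _ "1/2"]) (auto simp: eventually_sequentially)

end
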